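(* Assume (H1)–(H4) and the data below. Let $d_1\ge d_0$, where $d_0$ is such that for all $d_1\ge d_0$ the function $\underline v^1$ below satisfies the sub-solution inequality of $(E_z)$ pointwise on $\mathbb R\times\mathbb R^N$ (such $d_0$ exists). Let $b>0$ be so small that $b\phi_0(x+z)$ satisfies $\int k(y-x)b\phi_0(y+z)dy-b\phi_0(x+z)+f(x+z,b\phi_0(x+z))b\phi_0(x+z)\ge0$ for all $x,z$, and let $M>0$ be such that $\underline v^1(t,x;z,T)\ge b$ whenever $M-2\delta_0\le x\cdot\xi+cT-ct\le M$ (for all $z,T$). For $z\in\mathbb R^N$, $T>0$ define $$\underline u(t,x)=\begin{cases}\max\{b\phi_0(x+z),\ \underline v^1(t,x;z,T)\}, & x\cdot\xi+cT-ct<M,\\ \underline v^1(t,x;z,T), & x\cdot\xi+cT-ct\ge M,\end{cases}$$ where $\underline v^1(t,x;z,T)=e^{-\mu(x\cdot\xi+cT-ct)}\phi(x+z)-d_1e^{-\mu_1(x\cdot\xi+cT-ct)}\phi_1(x+z)$. Then $\underline u$ is a sub-solution of $(E_z)$: for each $x$, $t\mapsto\underline u(t,x)$ is continuous and differentiable for a.e. $t$, and at every such $t$, $\partial_t\underline u(t,x)\le\int k(y-x)\underline u(t,y)dy-\underline u(t,x)+\underline u(t,x)f(x+z,\underline u(t,x))$.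
   Context: Setting: $N\ge1$, $S^{N-1}$ unit sphere, $e_i$ standard basis vectors. $k\in C^1(\mathbb R^N)$, $k(z)>0$ for $\|z\|<\delta_0$, $k(z)=0$ for $\|z\|\ge\delta_0$ (some $\delta_0>0$), $\int k=1$. $f:\mathbb R^N\times\mathbb R\to\mathbb R$ with $f(x+p_ie_i,u)=f(x,u)$ for given periods $p_i>0$. $(E_z)$: $\partial_tu=\int_{\mathbb R^N}k(y-x)u(t,y)dy-u(t,x)+u(t,x)f(x+z,u(t,x))$. $X_p$: continuous $p$-periodic functions with sup norm, $X_p^+$ nonnegative ones; $a_0(x)=f(x,0)$; $(\mathcal K_{\xi,\mu}v)(x)=\int e^{-\mu(y-x)\cdot\xi}k(y-x)v(y)dy$, $\mathcal K=\mathcal K_{\xi,0}$; $\lambda_0(\xi,\mu,a_0)=\sup\{\mathrm{Re}\lambda:\lambda\in\sigma(\mathcal K_{\xi,\mu}-I+a_0I)\}$ on $X_p$; $\lambda_0=\lambda_0(\xi,0,a_0)$. Principal eigenvalue: algebraically simple eigenvalue with eigenfunction in $X_p^+$, rest of spectrum has smaller real part. (H1) $f\in C^1(\mathbb R^N\times[0,\infty))$, $\sup_{x,u\ge0}\partial_uf<0$, $f(x,u)<0$ for $u$ large. (H2) $\lambda_0>0$. (H3) for all $\xi\in S^{N-1}$, $\mu\ge0$, $\lambda_0(\xi,\mu,a_0)$ is the principal eigenvalue of $\mathcal K_{\xi,\mu}-I+a_0I$. (H4) $f(x,u)=f(x,0)$ for $u\le0$. Known: for each $\xi$ there is $\mu^*(\xi)>0$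 with $c^*(\xi):=\inf_{\mu>0}\lambda_0(\xi,\mu,a_0)/\mu=\lambda_0(\xi,\mu^*(\xi),a_0)/\mu^*(\xi)<\lambda_0(\xi,\mu,a_0)/\mu$ for $\mu\in(0,\mu^*(\xi))$. Data: fix $\xi\in S^{N-1}$, $c>c^*(\xi)$, $\mu\in(0,\mu^*(\xi))$ with $\lambda_0(\xi,\mu,a_0)=c\mu$, and $\mu_1\in(\mu,\min\{2\mu,\mu^*(\xi)\})$ with $c^*(\xi)<\lambda_0(\xi,\mu_1,a_0)/\mu_1<c$. $\phi,\phi_1,\phi_0\in X_p^+$ are positive principal eigenfunctions of $\mathcal K_{\xi,\mu}-I+a_0I$, $\mathcal K_{\xi,\mu_1}-I+a_0I$, $\mathcal K-I+a_0I$ respectively, each with sup equal to $1$. *)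

theory Defs
  imports "HOL-Analysis.Analysis"
begin

definition C1_on :: "'a::real_normed_vector set \<Rightarrow> ('a \<Rightarrow> 'b::real_normed_vector) \<Rightarrow> bool" where
  "C1_on S F \<longleftrightarrow> (\<exists>D. (\<forall>q\<in>S. (F has_derivative blinfun_apply (D q)) (at q within S))
                        \<and> continuous_on S D)"

text \<open>X_p: continuous p-periodic functions (values in a real normed space;
  real-valued for X_p itself, complex-valued for its complexification).\<close>
definition Xp :: "('n::finite \<Rightarrow> real) \<Rightarrow> (real^'n \<Rightarrow> 'b::real_normed_vector) set" where
  "Xp p = {v. continuous_on UNIV v \<and> (\<forall>x i. v (x + p i *\<^sub>R axis i 1) = v x)}"

definition Kop :: "(real^'n::finite \<Rightarrow> real) \<Rightarrow> real^'n \<Rightarrow> real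
                    \<Rightarrow> (real^'n \<Rightarrow> 'b::real_normed_vector) \<Rightarrow> real^'n \<Rightarrow> 'b" where
  "Kop k \<xi> \<mu> v = (\<lambda>x. integral UNIV (\<lambda>y. (exp (- \<mu> * ((y - x) \<bullet> \<xi>)) * k (y - x)) *\<^sub>R v y))"

definition Lop :: "(real^'n::finite \<Rightarrow> real) \<Rightarrow> (real^'n \<Rightarrow> real) \<Rightarrow> real^'n \<Rightarrow> real
                    \<Rightarrow> (real^'n \<Rightarrow> 'b::real_normed_vector) \<Rightarrow> real^'n \<Rightarrow> 'b" where
  "Lop k a0 \<xi> \<mu> v = (\<lambda>x. Kop k \<xi> \<mu> v x - v x + a0 x *\<^sub>R v x)"

text \<open>Spectrum of K_{xi,mu} - I + a0 I on X_p (via the complexification of X_p).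
  By the open mapping theorem, bijectivity on the Banach space suffices for a bounded inverse.\<close>
definition spec :: "('n::finite \<Rightarrow> real) \<Rightarrow> (real^'n \<Rightarrow> real) \<Rightarrow> (real^'n \<Rightarrow> real)
                     \<Rightarrow> real^'n \<Rightarrow> real \<Rightarrow> complex set" where
  "spec p k a0 \<xi> \<mu> = {l. \<not> bij_betw (\<lambda>v :: real^'n \<Rightarrow> complex. \<lambda>x. Lop k a0 \<xi> \<mu> v x - l * v x)
                                   (Xp p) (Xp p)}"

definition lambda0 :: "('n::finite \<Rightarrow> real) \<Rightarrow> (real^'n \<Rightarrow> real) \<Rightarrow> (real^'n \<Rightarrow> real)
                     \<Rightarrow> real^'n \<Rightarrow> real \<Rightarrow> real" where
  "lambda0 p k a0 \<xi> \<mu> = Sup (Re ` spec p k a0 \<xi> \<mu>)"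

text \<open>Principal eigenvalue: algebraically simple eigenvalue (generalized eigenspace in the
  complexified X_p is one-dimensional) with an eigenfunction in X_p^+, and all other spectral
  points have strictly smaller real part.\<close>
definition principal_eigenvalue :: "('n::finite \<Rightarrow> real) \<Rightarrow> (real^'n \<Rightarrow> real) \<Rightarrow> (real^'n \<Rightarrow> real)
                     \<Rightarrow> real^'n \<Rightarrow> real \<Rightarrow> real \<Rightarrow> bool" where
  "principal_eigenvalue p k a0 \<xi> \<mu> lam \<longleftrightarrow>
     (\<exists>\<phi> \<in> Xp p. (\<forall>x. \<phi> x \<ge> (0::real)) \<and> \<phi> \<noteq> (\<lambda>_. 0) \<and> Lop k a0 \<xi> \<mu> \<phi> = (\<lambda>x. lam * \<phi> x))
   \<and> (\<exists>\<psi> :: real^'n \<Rightarrow> complex. \<psi> \<noteq> (\<lambda>_. 0) \<and>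
        {v \<in> Xp p. \<exists>n. ((\<lambda>w. \<lambda>x. Lop k a0 \<xi> \<mu> w x - complex_of_real lam * w x) ^^ n) v = (\<lambda>_. 0)}
        = {(\<lambda>x. a * \<psi> x) | a. True})
   \<and> (\<forall>l \<in> spec p k a0 \<xi> \<mu>. l \<noteq> complex_of_real lam \<longrightarrow> Re l < lam)"

definition cstar :: "('n::finite \<Rightarrow> real) \<Rightarrow> (real^'n \<Rightarrow> real) \<Rightarrow> (real^'n \<Rightarrow> real)
                     \<Rightarrow> real^'n \<Rightarrow> real" where
  "cstar p k a0 \<xi> = Inf {lambda0 p k a0 \<xi> \<mu> / \<mu> | \<mu>. \<mu> > 0}"

definition vsub :: "real^'n::finite \<Rightarrow> real \<Rightarrow> real \<Rightarrow> real \<Rightarrow> (real^'n \<Rightarrow> real) \<Rightarrow> (real^'n \<Rightarrow> real)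
                    \<Rightarrow> real \<Rightarrow> real^'n \<Rightarrow> real \<Rightarrow> real \<Rightarrow> real^'n \<Rightarrow> real" where
  "vsub \<xi> c \<mu> \<mu>1 \<phi> \<phi>1 d z T t x =
     exp (- \<mu> * (x \<bullet> \<xi> + c * T - c * t)) * \<phi> (x + z)
     - d * exp (- \<mu>1 * (x \<bullet> \<xi> + c * T - c * t)) * \<phi>1 (x + z)"

definition usub :: "real^'n::finite \<Rightarrow> real \<Rightarrow> real \<Rightarrow> real \<Rightarrow> (real^'n \<Rightarrow> real) \<Rightarrow> (real^'n \<Rightarrow> real)
                    \<Rightarrow> (real^'n \<Rightarrow> real) \<Rightarrow> real \<Rightarrow> real \<Rightarrow> real
                    \<Rightarrow> real^'n \<Rightarrow> real \<Rightarrow> real \<Rightarrow> real^'n \<Rightarrow> real" where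
  "usub \<xi> c \<mu> \<mu>1 \<phi> \<phi>1 \<phi>0 d b M z T t x =
     (if x \<bullet> \<xi> + c * T - c * t < M
      then max (b * \<phi>0 (x + z)) (vsub \<xi> c \<mu> \<mu>1 \<phi> \<phi>1 d z T t x)
      else vsub \<xi> c \<mu> \<mu>1 \<phi> \<phi>1 d z T t x)"

end

theory Submission
  imports Defs
begin

text \<open>
  Along each time line the glued function has the form
  \<open>glue S M g V t = (if S t < M then max g (V t) else V t)\<close>, with \<open>S\<close> affine,
  \<open>V\<close> smooth and \<open>g \<le> V\<close> on a strip \<open>M - w \<le> S \<le> M\<close>.  We first study such glued
  functions of one real variable: they are continuous, differentiable outside the
  countable set of transversal crossings \<open>V t = g \<and> V' t \<noteq> 0\<close>, and at every point of
  differentiability either they coincide with \<open>V\<close> to first order, or they equal \<open>g\<close>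
  at a local minimum deep inside the region \<open>S < M - w\<close>, so their derivative is \<open>0\<close>.
  In the first case the sub-solution inequality is inherited from \<open>vsub\<close>, in the
  second from \<open>b \<phi>0\<close>, using that the kernel only sees points within distance \<open>\<delta>0\<close>
  and that \<open>usub\<close> dominates both pieces there.
\<close>

lemma periodic_shift_int:
  fixes g :: "'a::real_vector \<Rightarrow> 'b"
  assumes per: "\<And>x. g (x + a) = g x"
  shows "g (x + of_int n *\<^sub>R a) = g x"
proof (induction n rule: int_induct[where k = 0])
  case base
  then show ?case by simp
next
  case (step1 i)
  have "g (x + of_int (i + 1) *\<^sub>R a) = g ((x + of_int i *\<^sub>R a) + a)"
    by (simp add: algebra_simps)
  also have "\<dots> = g (x + of_int i *\<^sub>R a)" by (rule per)
  finally show ?case using step1(2) by simp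
next
  case (step2 i)
  have "g (x + of_int i *\<^sub>R a) = g ((x + of_int (i - 1) *\<^sub>R a) + a)"
    by (simp add: algebra_simps)
  also have "\<dots> = g (x + of_int (i - 1) *\<^sub>R a)" by (rule per)
  finally show ?case using step2(2) by simp
qed

lemma periodic_shift_lattice:
  fixes g :: "'a::real_vector \<Rightarrow> 'b"
  assumes per: "\<And>x i. g (x + a i) = g x" and fin: "finite A"
  shows "g (x + (\<Sum>i\<in>A. of_int (n i) *\<^sub>R a i)) = g x"
  using fin
proof (induction A)
  case empty
  then show ?case by simp
next
  case (insert j A)
  have "g (x + (\<Sum>i\<in>insert j A. of_int (n i) *\<^sub>R a i))
      = g ((x + (\<Sum>i\<in>A. of_int (n i) *\<^sub>R a i)) + of_int (n j) *\<^sub>R a j)"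
    using insert.hyps by (simp add: algebra_simps)
  also have "\<dots> = g (x + (\<Sum>i\<in>A. of_int (n i) *\<^sub>R a i))"
    using per by (rule periodic_shift_int)
  finally show ?case using insert.IH by simp
qed

lemma lattice_component:
  fixes p :: "'n::finite \<Rightarrow> real"
  shows "(\<Sum>i\<in>UNIV. of_int (n i) *\<^sub>R (p i *\<^sub>R axis i (1::real))) $ j = of_int (n j) * p j"
  by (simp add: sum_component axis_def if_distrib cong: if_cong)

lemma floor_mult_bounds:
  fixes t q :: real
  assumes "q > 0"
  shows "0 \<le> t - of_int \<lfloor>t / q\<rfloor> * q \<and> t - of_int \<lfloor>t / q\<rfloor> * q \<le> q"
proof -
  have lower: "of_int \<lfloor>t / q\<rfloor> * q \<le> t"
    using of_int_floor_le[of "t / q"] assms by (simp add: le_divide_eq)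
  have "t / q < of_int \<lfloor>t / q\<rfloor> + 1" by linarith
  then have upper: "t < (of_int \<lfloor>t / q\<rfloor> + 1) * q"
    using assms by (metis pos_divide_less_eq)
  show ?thesis using lower upper by (simp add: algebra_simps)
qed

text \<open>A continuous periodic function takes all its values on a compact cell, so it is
  bounded; in particular each of its values lies below its supremum.\<close>

lemma Xp_bounded:
  fixes g :: "real^'n::finite \<Rightarrow> real"
  assumes g: "g \<in> Xp p" and p_pos: "\<And>i. p i > 0"
  shows "bounded (range g)"
proof -
  define q :: "real^'n" where "q = (\<chi> i. p i)"
  have "range g \<subseteq> g ` cbox 0 q"
  proof
    fix w assume "w \<in> range g"
    then obtain x where w: "w = g x" by auto
    define n where "n i = - \<lfloor>x $ i / p i\<rfloor>" for i
    define x0 where "x0 = x + (\<Sum>i\<in>UNIV. of_int (n i) *\<^sub>R (p i *\<^sub>R axis i 1))"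
    have "x0 $ j = x $ j - of_int \<lfloor>x $ j / p j\<rfloor> * p j" for j
      using lattice_component[of n p j] by (simp add: x0_def n_def)
    then have "x0 \<in> cbox 0 q"
      using floor_mult_bounds[OF p_pos] by (simp add: mem_box_cart q_def)
    moreover have "g x0 = g x"
      unfolding x0_def using g by (intro periodic_shift_lattice) (auto simp: Xp_def)
    ultimately show "w \<in> g ` cbox 0 q" using w by (metis image_eqI)
  qed
  moreover have "compact (g ` cbox 0 q)"
    using g by (intro compact_continuous_image) (auto simp: Xp_def intro: continuous_on_subset)
  ultimately show ?thesis by (meson bounded_subset compact_imp_bounded)
qed

lemma Xp_le_Sup:
  fixes g :: "real^'n::finite \<Rightarrow> real"
  assumes "g \<in> Xp p" "\<And>i. p i > 0"
  shows "g x \<le> Sup (range g)"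
  using Xp_bounded[OF assms] by (intro cSup_upper bounded_imp_bdd_above) auto

lemma C1_on_continuous: "C1_on S F \<Longrightarrow> continuous_on S F"
  unfolding C1_on_def continuous_on_eq_continuous_within
  using has_derivative_continuous by blast

lemma differentiable_cong_nhds:
  fixes f h :: "'a::real_normed_vector \<Rightarrow> 'b::real_normed_vector"
  assumes "f differentiable (at t)" and "\<forall>\<^sub>F s in nhds t. f s = h s"
  shows "h differentiable (at t)"
proof -
  obtain U where "open U" "t \<in> U" "\<forall>s\<in>U. f s = h s"
    using assms(2) by (auto simp: eventually_nhds)
  then show ?thesis
    using assms(1) unfolding differentiable_def by (metis has_derivative_transform_within_open)
qed

lemma deriv_zero_at_local_min:
  fixes f :: "real \<Rightarrow> real"
  assumes "(f has_field_derivative D) (at t)" "open U" "t \<in> U" "\<And>s. s \<in> U \<Longrightarrow> f t \<le> f s"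
  shows "D = 0"
proof -
  have "(\<lambda>h. D * h) = (\<lambda>h. 0)"
    using assms by (intro differential_zero_maxmin[of t U f]) (auto simp: has_field_derivative_def)
  then show ?thesis by (metis mult.right_neutral)
qed

lemma max_const_differentiable:
  fixes V :: "real \<Rightarrow> real"
  assumes V: "(V has_field_derivative V') (at t)" and regular: "V t \<noteq> g \<or> V' = 0"
  shows "(\<lambda>s. max g (V s)) differentiable (at t)"
proof -
  have V_diff: "V differentiable (at t)"
    using V real_differentiable_def by blast
  have lim: "(V \<longlongrightarrow> V t) (nhds t)"
    using DERIV_isCont[OF V] by (simp add: isCont_def tendsto_at_iff_tendsto_nhds)
  consider "g < V t" | "V t < g" | "V t = g" "V' = 0"
    using regular by linarith
  then show ?thesis
  proof cases
    case 1
    have "\<forall>\<^sub>F s in nhds t. V s = max g (V s)"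
      using order_tendstoD(1)[OF lim 1] by (rule eventually_mono) auto
    then show ?thesis using V_diff by (rule differentiable_cong_nhds[rotated])
  next
    case 2
    have "\<forall>\<^sub>F s in nhds t. g = max g (V s)"
      using order_tendstoD(2)[OF lim 2] by (rule eventually_mono) auto
    then show ?thesis by (rule differentiable_cong_nhds[rotated]) simp
  next
    case 3
    have "((\<lambda>s. (V s - V t) / (s - t)) \<longlongrightarrow> 0) (at t)"
      using V 3 by (simp add: has_field_derivative_iff)
    then have lim_abs: "((\<lambda>s. \<bar>(V s - V t) / (s - t)\<bar>) \<longlongrightarrow> 0) (at t)"
      by (rule tendsto_rabs_zero)
    have bound: "norm ((max g (V s) - max g (V t)) / (s - t)) \<le> \<bar>(V s - V t) / (s - t)\<bar>" for s
    proof -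
      have "\<bar>max g (V s) - max g (V t)\<bar> \<le> \<bar>V s - V t\<bar>" using 3 by auto
      then show ?thesis by (simp add: abs_divide divide_right_mono)
    qed
    have "((\<lambda>s. (max g (V s) - max g (V t)) / (s - t)) \<longlongrightarrow> 0) (at t)"
      by (rule Lim_null_comparison[OF always_eventually lim_abs]) (use bound in blast)
    then have "((\<lambda>s. max g (V s)) has_field_derivative 0) (at t)"
      by (simp only: has_field_derivative_iff)
    then show ?thesis using real_differentiable_def by blast
  qed
qed

text \<open>Transversal crossings of a level by a \<open>C\<^sup>1\<close> function are isolated, hence form a
  countable set.\<close>

lemma countable_transversal_level_points:
  fixes V V' :: "real \<Rightarrow> real"
  assumes V: "\<And>t. (V has_field_derivative V' t) (at t)" and V'_cont: "continuous_on UNIV V'"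
  shows "countable {t. V t = g \<and> V' t \<noteq> 0}"
proof -
  define D where "D = {t. V' t \<noteq> 0}"
  have D_open: "open D" unfolding D_def using V'_cont by (simp add: open_Collect_neq)
  have "{t. V t = g \<and> V' t \<noteq> 0} sparse_in D"
    unfolding sparse_in_open[OF D_open]
  proof
    fix y assume "y \<in> D"
    have "\<forall>\<^sub>F s in at y. V s \<noteq> g"
    proof (cases "V y = g")
      case False
      have "(V \<longlongrightarrow> V y) (at y)" using DERIV_isCont[OF V] by (simp add: isCont_def)
      then show ?thesis using False by (rule tendsto_imp_eventually_ne)
    next
      case True
      have "((\<lambda>s. (V s - V y) / (s - y)) \<longlongrightarrow> V' y) (at y)"
        using V[of y] by (simp add: has_field_derivative_iff)
      then have "\<forall>\<^sub>F s in at y. (V s - V y) / (s - y) \<noteq> 0"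
        using \<open>y \<in> D\<close> by (intro tendsto_imp_eventually_ne) (auto simp: D_def)
      then show ?thesis by (rule eventually_mono) (use True in auto)
    qed
    then show "\<not> y islimpt {t. V t = g \<and> V' t \<noteq> 0}"
      by (auto simp: islimpt_iff_eventually elim: eventually_mono)
  qed
  then have "countable (D \<inter> {t. V t = g \<and> V' t \<noteq> 0})"
    by (rule sparse_imp_countable[OF D_open])
  moreover have "D \<inter> {t. V t = g \<and> V' t \<noteq> 0} = {t. V t = g \<and> V' t \<noteq> 0}"
    by (auto simp: D_def)
  ultimately show ?thesis by simp
qed

text \<open>This is the shape of \<open>usub\<close> both in time and in
  space.\<close>

definition glue :: "('a \<Rightarrow> real) \<Rightarrow> real \<Rightarrow> ('a \<Rightarrow> real) \<Rightarrow> ('a \<Rightarrow> real) \<Rightarrow> 'a \<Rightarrow> real" where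
  "glue S M G V a = (if S a < M then max (G a) (V a) else V a)"

lemma glue_ge: "V a \<le> glue S M G V a"
  by (simp add: glue_def)

lemma glue_ge_left: "S a < M \<Longrightarrow> G a \<le> glue S M G V a"
  by (simp add: glue_def)

lemma glue_continuous:
  fixes S G V :: "'a::topological_space \<Rightarrow> real"
  assumes "continuous_on UNIV S" "continuous_on UNIV G" "continuous_on UNIV V"
    and seam: "\<And>a. S a = M \<Longrightarrow> G a \<le> V a"
  shows "continuous_on UNIV (glue S M G V)"
proof -
  have "continuous_on ({a. S a \<le> M} \<union> {a. M \<le> S a})
          (\<lambda>a. if S a < M then max (G a) (V a) else V a)"
  proof (rule continuous_on_cases)
    show "closed {a. S a \<le> M}" "closed {a. M \<le> S a}"
      using assms(1) by (simp_all add: closed_Collect_le)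
    show "continuous_on {a. S a \<le> M} (\<lambda>a. max (G a) (V a))"
      using assms(2,3) by (auto intro!: continuous_intros intro: continuous_on_subset)
    show "continuous_on {a. M \<le> S a} V"
      using assms(3) by (auto intro: continuous_on_subset)
    show "\<forall>a. a \<in> {a. S a \<le> M} \<and> \<not> S a < M \<or> a \<in> {a. M \<le> S a} \<and> S a < M \<longrightarrow>
          max (G a) (V a) = V a"
      using seam by force
  qed
  moreover have "{a. S a \<le> M} \<union> {a. M \<le> S a} = UNIV" by auto
  ultimately show ?thesis by (simp add: glue_def[abs_def])
qed

lemma glue_differentiable:
  fixes S V :: "real \<Rightarrow> real"
  assumes S_cont: "continuous_on UNIV S"
    and V: "(V has_field_derivative V') (at t)"
    and regular: "V t \<noteq> g \<or> V' = 0"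
    and w: "w > 0"
    and strip: "\<And>s. M - w \<le> S s \<Longrightarrow> S s \<le> M \<Longrightarrow> g \<le> V s"
  shows "glue S M (\<lambda>_. g) V differentiable (at t)"
proof -
  have S_lim: "(S \<longlongrightarrow> S t) (nhds t)"
    using S_cont by (simp add: continuous_on_eq_continuous_at isCont_def tendsto_at_iff_tendsto_nhds)
  show ?thesis
  proof (cases "S t < M")
    case True
    have "\<forall>\<^sub>F s in nhds t. max g (V s) = glue S M (\<lambda>_. g) V s"
      using order_tendstoD(2)[OF S_lim True] by (rule eventually_mono) (simp add: glue_def)
    then show ?thesis
      using max_const_differentiable[OF V regular] by (rule differentiable_cong_nhds[rotated])
  next
    case False
    have "M - w < S t" using False w by linarith
    have "\<forall>\<^sub>F s in nhds t. V s = glue S M (\<lambda>_. g) V s"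
      using order_tendstoD(1)[OF S_lim \<open>M - w < S t\<close>] by (rule eventually_mono) (auto simp: glue_def strip)
    then show ?thesis
      using V real_differentiable_def by (blast intro: differentiable_cong_nhds)
  qed
qed

lemma glue_ae_differentiable:
  fixes S V V' :: "real \<Rightarrow> real"
  assumes S_cont: "continuous_on UNIV S"
    and V: "\<And>t. (V has_field_derivative V' t) (at t)" and V'_cont: "continuous_on UNIV V'"
    and w: "w > 0"
    and strip: "\<And>s. M - w \<le> S s \<Longrightarrow> S s \<le> M \<Longrightarrow> g \<le> V s"
  shows "AE t in lborel. glue S M (\<lambda>_. g) V differentiable (at t)"
proof (rule AE_I')
  show "{t. V t = g \<and> V' t \<noteq> 0} \<in> null_sets lborel"
    using countable_transversal_level_points[OF V V'_cont] by (rule countable_imp_null_set_lborel)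
  show "{t \<in> space lborel. \<not> glue S M (\<lambda>_. g) V differentiable (at t)}
      \<subseteq> {t. V t = g \<and> V' t \<noteq> 0}"
    using glue_differentiable[OF S_cont V _ w strip] by blast
qed

text \<open>At a point of differentiability the glued profile either touches \<open>V\<close> from above
  (so has the derivative of \<open>V\<close>), or sits at its minimum value \<open>g\<close> strictly inside
  \<open>S < M - w\<close> (so has derivative \<open>0\<close>).\<close>

lemma glue_derivative_cases:
  fixes S V :: "real \<Rightarrow> real"
  assumes S_cont: "continuous_on UNIV S"
    and V: "(V has_field_derivative V') (at t)"
    and strip: "\<And>s. M - w \<le> S s \<Longrightarrow> S s \<le> M \<Longrightarrow> g \<le> V s"
    and diff: "glue S M (\<lambda>_. g) V differentiable (at t)"
  shows "(glue S M (\<lambda>_. g) V t = V t \<and> deriv (glue S M (\<lambda>_. g) V) t = V')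
       \<or> (glue S M (\<lambda>_. g) V t = g \<and> S t < M - w \<and> deriv (glue S M (\<lambda>_. g) V) t = 0)"
proof -
  let ?u = "glue S M (\<lambda>_. g) V"
  have u: "(?u has_field_derivative deriv ?u t) (at t)"
    using diff by (simp add: DERIV_deriv_iff_real_differentiable)
  show ?thesis
  proof (cases "?u t = V t")
    case True
    \<comment> \<open>\<open>?u - V\<close> is nonnegative and vanishes at \<open>t\<close>\<close>
    have "deriv ?u t - V' = 0"
      by (rule deriv_zero_at_local_min[OF DERIV_diff[OF u V] open_UNIV])
        (use True glue_ge in auto)
    then show ?thesis using True by simp
  next
    case False
    then have St: "S t < M" and ut: "?u t = g" "V t < g"
      by (auto simp: glue_def max_def split: if_splits)
    have "S t < M - w"
      using strip[of t] St ut by force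
    \<comment> \<open>near \<open>t\<close> the glued function is still a maximum with \<open>g\<close>, so \<open>t\<close> is a local minimum\<close>
    moreover have "deriv ?u t = 0"
    proof (rule deriv_zero_at_local_min[OF u])
      show "open {s. S s < M}" using S_cont by (simp add: open_Collect_less)
      show "t \<in> {s. S s < M}" using St by simp
      show "?u t \<le> ?u s" if "s \<in> {s. S s < M}" for s
        using that ut glue_ge_left[of S s M "\<lambda>_. g" V] by simp
    qed
    ultimately show ?thesis using ut by simp
  qed
qed

lemma kernel_product_integrable:
  fixes k h :: "real^'n::finite \<Rightarrow> real"
  assumes "continuous_on UNIV k" "continuous_on UNIV h" "\<And>w. \<delta> \<le> norm w \<Longrightarrow> k w = 0"
  shows "(\<lambda>y. k (y - x) * h y) integrable_on UNIV"
proof -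
  define a :: "real^'n" where "a = x - (\<chi> i. \<delta>)"
  define b :: "real^'n" where "b = x + (\<chi> i. \<delta>)"
  have "(\<lambda>y. k (y - x) * h y) integrable_on cbox a b"
    using assms(1,2) by (intro integrable_continuous)
      (auto intro!: continuous_intros continuous_on_compose2[OF assms(1)] intro: continuous_on_subset)
  moreover have "k (y - x) * h y = 0" if y_out: "y \<notin> cbox a b" for y
  proof -
    obtain i where "\<not> (a $ i \<le> y $ i \<and> y $ i \<le> b $ i)"
      using y_out unfolding mem_box_cart by blast
    then have "\<delta> < \<bar>(y - x) $ i\<bar>" by (auto simp: a_def b_def)
    also have "\<dots> \<le> norm (y - x)" by (rule component_le_norm_cart)
    finally show ?thesis using assms(3) by simp
  qed
  ultimately show ?thesis by (rule integrable_on_superset) auto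
qed

lemma kernel_integral_mono:
  fixes k h1 h2 :: "real^'n::finite \<Rightarrow> real"
  assumes k_cont: "continuous_on UNIV k" and k_nonneg: "\<And>w. 0 \<le> k w"
    and k_supp: "\<And>w. \<delta> \<le> norm w \<Longrightarrow> k w = 0"
    and h_cont: "continuous_on UNIV h1" "continuous_on UNIV h2"
    and le: "\<And>y. norm (y - x) < \<delta> \<Longrightarrow> h1 y \<le> h2 y"
  shows "integral UNIV (\<lambda>y. k (y - x) * h1 y) \<le> integral UNIV (\<lambda>y. k (y - x) * h2 y)"
proof (rule integral_le)
  show "(\<lambda>y. k (y - x) * h1 y) integrable_on UNIV" "(\<lambda>y. k (y - x) * h2 y) integrable_on UNIV"
    using k_supp by (intro kernel_product_integrable[OF k_cont h_cont(1)]
        kernel_product_integrable[OF k_cont h_cont(2)]; blast)+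
  show "k (y - x) * h1 y \<le> k (y - x) * h2 y" for y
    using le[of y] k_supp[of "y - x"] k_nonneg[of "y - x"] by (cases "norm (y - x) < \<delta>") (auto intro: mult_left_mono)
qed

lemma vsub_time_derivative:
  "\<exists>V'. continuous_on UNIV V' \<and>
     (\<forall>t. ((\<lambda>s. vsub \<xi> c \<mu> \<mu>1 \<phi> \<phi>1 d z T s x) has_field_derivative V' t) (at t))"
proof (intro exI conjI allI)
  define S where "S t = x \<bullet> \<xi> + c * T - c * t" for t
  show "continuous_on UNIV (\<lambda>t. exp (- \<mu> * S t) * (\<mu> * c) * \<phi> (x + z)
         - d * (exp (- \<mu>1 * S t) * (\<mu>1 * c)) * \<phi>1 (x + z))"
    unfolding S_def by (intro continuous_intros)
  show "((\<lambda>s. vsub \<xi> c \<mu> \<mu>1 \<phi> \<phi>1 d z T s x) has_field_derivative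
         exp (- \<mu> * S t) * (\<mu> * c) * \<phi> (x + z) - d * (exp (- \<mu>1 * S t) * (\<mu>1 * c)) * \<phi>1 (x + z))
         (at t)" for t
    unfolding vsub_def S_def by (auto intro!: derivative_eq_intros simp: algebra_simps)
qed

lemma vsub_continuous_space:
  assumes "continuous_on UNIV \<phi>" "continuous_on UNIV \<phi>1"
  shows "continuous_on UNIV (\<lambda>y. vsub \<xi> c \<mu> \<mu>1 \<phi> \<phi>1 d z T t y)"
  unfolding vsub_def
  by (intro continuous_intros continuous_on_compose2[OF assms(1)] continuous_on_compose2[OF assms(2)]) auto

lemma usub_time_glue:
  "(\<lambda>t. usub \<xi> c \<mu> \<mu>1 \<phi> \<phi>1 \<phi>0 d b M z T t x)
   = glue (\<lambda>t. x \<bullet> \<xi> + c * T - c * t) M (\<lambda>_. b * \<phi>0 (x + z)) (\<lambda>t. vsub \<xi> c \<mu> \<mu>1 \<phi> \<phi>1 d z T t x)"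
  by (simp add: fun_eq_iff usub_def glue_def)

lemma usub_space_glue:
  "(\<lambda>y. usub \<xi> c \<mu> \<mu>1 \<phi> \<phi>1 \<phi>0 d b M z T t y)
   = glue (\<lambda>y. y \<bullet> \<xi> + c * T - c * t) M (\<lambda>y. b * \<phi>0 (y + z)) (\<lambda>y. vsub \<xi> c \<mu> \<mu>1 \<phi> \<phi>1 d z T t y)"
  by (simp add: fun_eq_iff usub_def glue_def)

lemma vsub_le_usub: "vsub \<xi> c \<mu> \<mu>1 \<phi> \<phi>1 d z T t y \<le> usub \<xi> c \<mu> \<mu>1 \<phi> \<phi>1 \<phi>0 d b M z T t y"
  by (simp add: usub_def)

lemma bphi0_le_usub:
  "y \<bullet> \<xi> + c * T - c * t < M \<Longrightarrow> b * \<phi>0 (y + z) \<le> usub \<xi> c \<mu> \<mu>1 \<phi> \<phi>1 \<phi>0 d b M z T t y"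
  by (simp add: usub_def)

lemma usub_continuous_space:
  assumes \<phi>_cont: "continuous_on UNIV \<phi>" "continuous_on UNIV \<phi>1" "continuous_on UNIV \<phi>0"
    and seam: "\<And>y. y \<bullet> \<xi> + c * T - c * t = M \<Longrightarrow> b * \<phi>0 (y + z) \<le> vsub \<xi> c \<mu> \<mu>1 \<phi> \<phi>1 d z T t y"
  shows "continuous_on UNIV (\<lambda>y. usub \<xi> c \<mu> \<mu>1 \<phi> \<phi>1 \<phi>0 d b M z T t y)"
  unfolding usub_space_glue
  by (intro glue_continuous vsub_continuous_space[OF \<phi>_cont(1,2)] seam continuous_intros
      continuous_on_compose2[OF \<phi>_cont(3)]) auto

lemma usub_time_continuous:
  assumes w: "w > 0"
    and strip: "\<And>t. M - w \<le> x \<bullet> \<xi> + c * T - c * t \<Longrightarrow> x \<bullet> \<xi> + c * T - c * t \<le> M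
                  \<Longrightarrow> b * \<phi>0 (x + z) \<le> vsub \<xi> c \<mu> \<mu>1 \<phi> \<phi>1 d z T t x"
  shows "continuous_on UNIV (\<lambda>t. usub \<xi> c \<mu> \<mu>1 \<phi> \<phi>1 \<phi>0 d b M z T t x)"
proof -
  obtain V' where "\<And>t. ((\<lambda>s. vsub \<xi> c \<mu> \<mu>1 \<phi> \<phi>1 d z T s x) has_field_derivative V' t) (at t)"
    using vsub_time_derivative by blast
  then have V_cont: "continuous_on UNIV (\<lambda>t. vsub \<xi> c \<mu> \<mu>1 \<phi> \<phi>1 d z T t x)"
    using DERIV_isCont continuous_at_imp_continuous_on by blast
  show ?thesis
    unfolding usub_time_glue
    by (intro glue_continuous V_cont continuous_intros) (use strip w in auto)
qed

lemma usub_time_ae_differentiable: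
  assumes w: "w > 0"
    and strip: "\<And>t. M - w \<le> x \<bullet> \<xi> + c * T - c * t \<Longrightarrow> x \<bullet> \<xi> + c * T - c * t \<le> M
                  \<Longrightarrow> b * \<phi>0 (x + z) \<le> vsub \<xi> c \<mu> \<mu>1 \<phi> \<phi>1 d z T t x"
  shows "AE t in lborel. (\<lambda>t. usub \<xi> c \<mu> \<mu>1 \<phi> \<phi>1 \<phi>0 d b M z T t x) differentiable (at t)"
proof -
  obtain V' where V'_cont: "continuous_on UNIV V'"
    and V': "\<And>t. ((\<lambda>s. vsub \<xi> c \<mu> \<mu>1 \<phi> \<phi>1 d z T s x) has_field_derivative V' t) (at t)"
    using vsub_time_derivative by blast
  have S_cont: "continuous_on UNIV (\<lambda>t. x \<bullet> \<xi> + c * T - c * t)"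
    by (intro continuous_intros)
  show ?thesis
    unfolding usub_time_glue by (rule glue_ae_differentiable[OF S_cont V' V'_cont w strip])
qed

text \<open>The sub-solution inequality for \<open>usub\<close> at a point of differentiability, inherited
  from \<open>vsub\<close> where \<open>usub\<close> touches it and from \<open>b \<phi>0\<close> elsewhere.\<close>

lemma usub_subsolution_inequality:
  fixes k :: "real^'n::finite \<Rightarrow> real" and f :: "real^'n \<Rightarrow> real \<Rightarrow> real"
  assumes k_cont: "continuous_on UNIV k" and k_nonneg: "\<And>w. 0 \<le> k w"
    and k_supp: "\<And>w. \<delta> \<le> norm w \<Longrightarrow> k w = 0" and \<delta>_pos: "\<delta> > 0"
    and \<xi>_unit: "norm \<xi> = 1"
    and \<phi>_cont: "continuous_on UNIV \<phi>" "continuous_on UNIV \<phi>1" "continuous_on UNIV \<phi>0"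
    and strip: "\<And>t y. M - 2 * \<delta> \<le> y \<bullet> \<xi> + c * T - c * t \<Longrightarrow> y \<bullet> \<xi> + c * T - c * t \<le> M
                  \<Longrightarrow> b * \<phi>0 (y + z) \<le> vsub \<xi> c \<mu> \<mu>1 \<phi> \<phi>1 d z T t y"
    and v_sub: "deriv (\<lambda>s. vsub \<xi> c \<mu> \<mu>1 \<phi> \<phi>1 d z T s x) t
               \<le> integral UNIV (\<lambda>y. k (y - x) * vsub \<xi> c \<mu> \<mu>1 \<phi> \<phi>1 d z T t y)
                 - vsub \<xi> c \<mu> \<mu>1 \<phi> \<phi>1 d z T t x
                 + vsub \<xi> c \<mu> \<mu>1 \<phi> \<phi>1 d z T t x * f (x + z) (vsub \<xi> c \<mu> \<mu>1 \<phi> \<phi>1 d z T t x)"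
    and b_sub: "0 \<le> integral UNIV (\<lambda>y. k (y - x) * (b * \<phi>0 (y + z))) - b * \<phi>0 (x + z)
                     + f (x + z) (b * \<phi>0 (x + z)) * (b * \<phi>0 (x + z))"
    and diff: "(\<lambda>t. usub \<xi> c \<mu> \<mu>1 \<phi> \<phi>1 \<phi>0 d b M z T t x) differentiable (at t)"
  shows "deriv (\<lambda>s. usub \<xi> c \<mu> \<mu>1 \<phi> \<phi>1 \<phi>0 d b M z T s x) t
         \<le> integral UNIV (\<lambda>y. k (y - x) * usub \<xi> c \<mu> \<mu>1 \<phi> \<phi>1 \<phi>0 d b M z T t y)
           - usub \<xi> c \<mu> \<mu>1 \<phi> \<phi>1 \<phi>0 d b M z T t x
           + usub \<xi> c \<mu> \<mu>1 \<phi> \<phi>1 \<phi>0 d b M z T t x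
             * f (x + z) (usub \<xi> c \<mu> \<mu>1 \<phi> \<phi>1 \<phi>0 d b M z T t x)"
proof -
  let ?u = "usub \<xi> c \<mu> \<mu>1 \<phi> \<phi>1 \<phi>0 d b M z T"
  let ?v = "vsub \<xi> c \<mu> \<mu>1 \<phi> \<phi>1 d z T"
  let ?g = "\<lambda>y. b * \<phi>0 (y + z)"
  obtain V' where V': "((\<lambda>s. ?v s x) has_field_derivative V') (at t)"
    using vsub_time_derivative by blast
  have S_cont: "continuous_on UNIV (\<lambda>t. x \<bullet> \<xi> + c * T - c * t)"
    by (intro continuous_intros)
  have cases: "(?u t x = ?v t x \<and> deriv (\<lambda>s. ?u s x) t = V')
      \<or> (?u t x = ?g x \<and> x \<bullet> \<xi> + c * T - c * t < M - 2 * \<delta> \<and> deriv (\<lambda>s. ?u s x) t = 0)"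
    using glue_derivative_cases[where w = "2 * \<delta>", OF S_cont V' strip[where y = x]
        diff[unfolded usub_time_glue], folded usub_time_glue] by simp
  have u_cont: "continuous_on UNIV (?u t)"
    using strip \<delta>_pos by (intro usub_continuous_space[OF \<phi>_cont]) auto
  have v_le_u: "integral UNIV (\<lambda>y. k (y - x) * ?v t y) \<le> integral UNIV (\<lambda>y. k (y - x) * ?u t y)"
    by (intro kernel_integral_mono[OF k_cont k_nonneg k_supp
          vsub_continuous_space[OF \<phi>_cont(1,2)] u_cont vsub_le_usub])
  from cases show ?thesis
  proof (elim disjE conjE)
    assume u_eq: "?u t x = ?v t x" and du: "deriv (\<lambda>s. ?u s x) t = V'"
    have "deriv (\<lambda>s. ?v s x) t = V'" using V' by (rule DERIV_imp_deriv)
    then show ?thesis using v_sub v_le_u u_eq du by simp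
  next
    assume u_eq: "?u t x = ?g x" and front: "x \<bullet> \<xi> + c * T - c * t < M - 2 * \<delta>"
      and du: "deriv (\<lambda>s. ?u s x) t = 0"
    \<comment> \<open>the kernel only sees points \<open>y\<close> with \<open>(y - x) \<bullet> \<xi> < \<delta>\<close>, all in the region where
       \<open>?u \<ge> ?g\<close>\<close>
    have "?g y \<le> ?u t y" if "norm (y - x) < \<delta>" for y
    proof (rule bphi0_le_usub)
      have "(y - x) \<bullet> \<xi> \<le> norm (y - x) * norm \<xi>" by (rule norm_cauchy_schwarz)
      then show "y \<bullet> \<xi> + c * T - c * t < M"
        using that front \<delta>_pos \<xi>_unit by (simp add: inner_diff_left)
    qed
    then have "integral UNIV (\<lambda>y. k (y - x) * ?g y) \<le> integral UNIV (\<lambda>y. k (y - x) * ?u t y)"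
      by (intro kernel_integral_mono[OF k_cont k_nonneg k_supp _ u_cont])
        (auto intro!: continuous_intros continuous_on_compose2[OF \<phi>_cont(3)])
    then show ?thesis using b_sub u_eq du by (simp add: mult.commute)
  qed
qed

theorem proposition3p4:
  fixes k :: "real^'n \<Rightarrow> real" and f :: "real^'n \<Rightarrow> real \<Rightarrow> real"
    and p :: "'n \<Rightarrow> real" and \<delta>0 :: real
    and \<xi> :: "real^'n" and c \<mu> \<mu>1 mustar :: real
    and \<phi> \<phi>1 \<phi>0 :: "real^'n \<Rightarrow> real"
    and d0 d1 b M :: real
  assumes k_C1: "C1_on UNIV k"
    and \<delta>0_pos: "\<delta>0 > 0"
    and k_pos: "\<forall>z. norm z < \<delta>0 \<longrightarrow> k z > 0"
    and k_zero: "\<forall>z. norm z \<ge> \<delta>0 \<longrightarrow> k z = 0"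
    and k_int: "(k has_integral 1) UNIV"
    and p_pos: "\<forall>i. p i > 0"
    and f_per: "\<forall>x u i. f (x + p i *\<^sub>R axis i 1) u = f x u"
    \<comment> \<open>(H1)\<close>
    and H1_C1: "C1_on (UNIV \<times> {0..}) (\<lambda>(x, u). f x u)"
    and H1_du: "\<exists>\<epsilon>>0. \<forall>x u D. u \<ge> 0 \<longrightarrow>
                    ((\<lambda>v. f x v) has_real_derivative D) (at u within {0..}) \<longrightarrow> D \<le> - \<epsilon>"
    and H1_neg: "\<exists>U. \<forall>x u. u \<ge> U \<longrightarrow> f x u < 0"
    \<comment> \<open>(H2)\<close>
    and H2: "lambda0 p k (\<lambda>x. f x 0) \<xi> 0 > 0"
    \<comment> \<open>(H3)\<close>
    and H3: "\<forall>\<xi>'. norm \<xi>' = 1 \<longrightarrow> (\<forall>\<mu>'\<ge>0.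
               principal_eigenvalue p k (\<lambda>x. f x 0) \<xi>' \<mu>' (lambda0 p k (\<lambda>x. f x 0) \<xi>' \<mu>'))"
    \<comment> \<open>(H4)\<close>
    and H4: "\<forall>x u. u \<le> 0 \<longrightarrow> f x u = f x 0"
    \<comment> \<open>data\<close>
    and \<xi>_unit: "norm \<xi> = 1"
    and mustar: "mustar > 0"
      "cstar p k (\<lambda>x. f x 0) \<xi> = lambda0 p k (\<lambda>x. f x 0) \<xi> mustar / mustar"
      "\<forall>m. 0 < m \<and> m < mustar \<longrightarrow> cstar p k (\<lambda>x. f x 0) \<xi> < lambda0 p k (\<lambda>x. f x 0) \<xi> m / m"
    and c_gt: "c > cstar p k (\<lambda>x. f x 0) \<xi>"
    and \<mu>_range: "0 < \<mu>" "\<mu> < mustar"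
    and \<mu>_eq: "lambda0 p k (\<lambda>x. f x 0) \<xi> \<mu> = c * \<mu>"
    and \<mu>1_range: "\<mu> < \<mu>1" "\<mu>1 < min (2 * \<mu>) mustar"
    and \<mu>1_ineq: "cstar p k (\<lambda>x. f x 0) \<xi> < lambda0 p k (\<lambda>x. f x 0) \<xi> \<mu>1 / \<mu>1"
                 "lambda0 p k (\<lambda>x. f x 0) \<xi> \<mu>1 / \<mu>1 < c"
    and \<phi>_eig: "\<phi> \<in> Xp p" "\<forall>x. \<phi> x > 0"
      "Lop k (\<lambda>x. f x 0) \<xi> \<mu> \<phi> = (\<lambda>x. lambda0 p k (\<lambda>x. f x 0) \<xi> \<mu> * \<phi> x)"
      "Sup (range \<phi>) = 1"
    and \<phi>1_eig: "\<phi>1 \<in> Xp p" "\<forall>x. \<phi>1 x > 0"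
      "Lop k (\<lambda>x. f x 0) \<xi> \<mu>1 \<phi>1 = (\<lambda>x. lambda0 p k (\<lambda>x. f x 0) \<xi> \<mu>1 * \<phi>1 x)"
      "Sup (range \<phi>1) = 1"
    and \<phi>0_eig: "\<phi>0 \<in> Xp p" "\<forall>x. \<phi>0 x > 0"
      "Lop k (\<lambda>x. f x 0) \<xi> 0 \<phi>0 = (\<lambda>x. lambda0 p k (\<lambda>x. f x 0) \<xi> 0 * \<phi>0 x)"
      "Sup (range \<phi>0) = 1"
    \<comment> \<open>choice of d0, d1\<close>
    and d0: "\<forall>d\<ge>d0. \<forall>z T t x. T > 0 \<longrightarrow>
               deriv (\<lambda>s. vsub \<xi> c \<mu> \<mu>1 \<phi> \<phi>1 d z T s x) t
               \<le> integral UNIV (\<lambda>y. k (y - x) * vsub \<xi> c \<mu> \<mu>1 \<phi> \<phi>1 d z T t y)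
                 - vsub \<xi> c \<mu> \<mu>1 \<phi> \<phi>1 d z T t x
                 + vsub \<xi> c \<mu> \<mu>1 \<phi> \<phi>1 d z T t x * f (x + z) (vsub \<xi> c \<mu> \<mu>1 \<phi> \<phi>1 d z T t x)"
    and d1: "d1 \<ge> d0"
    \<comment> \<open>choice of b\<close>
    and b_pos: "b > 0"
    and b_sub: "\<forall>x z. integral UNIV (\<lambda>y. k (y - x) * (b * \<phi>0 (y + z))) - b * \<phi>0 (x + z)
                     + f (x + z) (b * \<phi>0 (x + z)) * (b * \<phi>0 (x + z)) \<ge> 0"
    \<comment> \<open>choice of M\<close>
    and M_pos: "M > 0"
    and M_prop: "\<forall>z T t x. M - 2 * \<delta>0 \<le> x \<bullet> \<xi> + c * T - c * t \<and> x \<bullet> \<xi> + c * T - c * t \<le> M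
                   \<longrightarrow> vsub \<xi> c \<mu> \<mu>1 \<phi> \<phi>1 d1 z T t x \<ge> b"
  shows "\<forall>z T. T > 0 \<longrightarrow> (\<forall>x.
           continuous_on UNIV (\<lambda>t. usub \<xi> c \<mu> \<mu>1 \<phi> \<phi>1 \<phi>0 d1 b M z T t x)
         \<and> (AE t in lborel. (\<lambda>t. usub \<xi> c \<mu> \<mu>1 \<phi> \<phi>1 \<phi>0 d1 b M z T t x) differentiable (at t))
         \<and> (\<forall>t. (\<lambda>t. usub \<xi> c \<mu> \<mu>1 \<phi> \<phi>1 \<phi>0 d1 b M z T t x) differentiable (at t) \<longrightarrow>
              deriv (\<lambda>s. usub \<xi> c \<mu> \<mu>1 \<phi> \<phi>1 \<phi>0 d1 b M z T s x) t
              \<le> integral UNIV (\<lambda>y. k (y - x) * usub \<xi> c \<mu> \<mu>1 \<phi> \<phi>1 \<phi>0 d1 b M z T t y)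
                - usub \<xi> c \<mu> \<mu>1 \<phi> \<phi>1 \<phi>0 d1 b M z T t x
                + usub \<xi> c \<mu> \<mu>1 \<phi> \<phi>1 \<phi>0 d1 b M z T t x
                  * f (x + z) (usub \<xi> c \<mu> \<mu>1 \<phi> \<phi>1 \<phi>0 d1 b M z T t x)))"
proof -
  have k_cont: "continuous_on UNIV k" using k_C1 by (rule C1_on_continuous)
  have k_nonneg: "0 \<le> k w" for w
    using k_pos k_zero by (cases "norm w < \<delta>0") (auto intro: less_imp_le)
  have \<phi>_cont: "continuous_on UNIV \<phi>" "continuous_on UNIV \<phi>1" "continuous_on UNIV \<phi>0"
    using \<phi>_eig(1) \<phi>1_eig(1) \<phi>0_eig(1) by (auto simp: Xp_def)
  \<comment> \<open>on the seam strip the front part dominates \<open>b \<phi>0\<close>, because \<open>\<phi>0 \<le> sup \<phi>0 = 1\<close>\<close>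
  have strip: "b * \<phi>0 (y + z) \<le> vsub \<xi> c \<mu> \<mu>1 \<phi> \<phi>1 d1 z T t y"
    if "M - 2 * \<delta>0 \<le> y \<bullet> \<xi> + c * T - c * t" "y \<bullet> \<xi> + c * T - c * t \<le> M" for z T t y
  proof -
    have "\<phi>0 (y + z) \<le> 1" using Xp_le_Sup[OF \<phi>0_eig(1)] p_pos \<phi>0_eig(4) by metis
    then have "b * \<phi>0 (y + z) \<le> b" using b_pos by simp
    also have "b \<le> vsub \<xi> c \<mu> \<mu>1 \<phi> \<phi>1 d1 z T t y" using M_prop that by blast
    finally show ?thesis .
  qed
  show ?thesis
  proof (intro allI impI conjI, goal_cases)
    case (1 z T x)
    show ?case by (rule usub_time_continuous[of "2 * \<delta>0"]) (use \<delta>0_pos strip in auto)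
  next
    case (2 z T x)
    show ?case by (rule usub_time_ae_differentiable[of "2 * \<delta>0"]) (use \<delta>0_pos strip in auto)
  next
    case (3 z T x t)
    then show ?case using d0 d1 b_sub k_zero
      by (intro usub_subsolution_inequality[OF k_cont k_nonneg _ \<delta>0_pos \<xi>_unit \<phi>_cont strip]) auto
  qed
qed

end
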